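(* Let $X$ be a regular Hausdorff $g$-first-countable space. Then $\mathcal{F}(X)$ is $g$-first-countable if and only if $\mathcal{F}(X)$ is sequential.
   Context: $\mathcal{F}(X)$ is the set of nonempty finite subsets of $X$ with the Vietoris topology (base: $\langle U_1,\dots,U_k\rangle=\{A: A\subset\bigcup_i U_i,\ A\cap U_j\neq\emptyset\ \forall j\}$, $U_i$ open in $X$). A space is sequential if every sequentially open set (a set $U$ such that every sequence converging to a point of $U$ is eventually in $U$) is open. A weak base for $Y$ is a cover $\mathcal{P}=\bigcup_{y\in Y}\mathcal{P}_y$ such that: for $U,V\in\mathcal{P}_y$ there is $W\in\mathcal{P}_y$ with $W\subset U\cap V$; each member of $\mathcal{P}_y$ contains $y$ and for each open $U\ni y$ some $P\in\mathcal{P}_y$ has $P\subset U$; and $G\subset Y$ is open whenever for each $y\in G$ some $P\in\mathcal{P}_y$ has $P\subset G$. $Y$ is $g$-first-countable if it has a weak base with each $\mathcal{P}_y$ countable. *)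

theory Defs
  imports "HOL-Analysis.Analysis"
begin

definition fin_subsets :: "'a topology \<Rightarrow> 'a set set" where
  "fin_subsets X = {A. finite A \<and> A \<noteq> {} \<and> A \<subseteq> topspace X}"

definition vietoris_basic :: "'a topology \<Rightarrow> 'a set set \<Rightarrow> 'a set set" where
  "vietoris_basic X Us = {A \<in> fin_subsets X. A \<subseteq> \<Union>Us \<and> (\<forall>U\<in>Us. A \<inter> U \<noteq> {})}"

definition fin_subsets_topology :: "'a topology \<Rightarrow> 'a set topology" where
  "fin_subsets_topology X = topology_generated_by
     {vietoris_basic X Us | Us. finite Us \<and> Us \<noteq> {} \<and> (\<forall>U\<in>Us. openin X U)}"

definition sequentially_open :: "'a topology \<Rightarrow> 'a set \<Rightarrow> bool" where
  "sequentially_open T U \<longleftrightarrow> U \<subseteq> topspace T \<and>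
     (\<forall>x\<in>U. \<forall>s. (\<forall>n. s n \<in> topspace T) \<and> limitin T s x sequentially
        \<longrightarrow> eventually (\<lambda>n. s n \<in> U) sequentially)"

definition sequential_space :: "'a topology \<Rightarrow> bool" where
  "sequential_space T \<longleftrightarrow> (\<forall>U. sequentially_open T U \<longrightarrow> openin T U)"

definition weak_base :: "'a topology \<Rightarrow> ('a \<Rightarrow> 'a set set) \<Rightarrow> bool" where
  "weak_base T P \<longleftrightarrow>
     (\<forall>y\<in>topspace T. \<forall>Q\<in>P y. Q \<subseteq> topspace T \<and> y \<in> Q) \<and>
     (\<forall>y\<in>topspace T. \<forall>U\<in>P y. \<forall>V\<in>P y. \<exists>W\<in>P y. W \<subseteq> U \<inter> V) \<and>
     (\<forall>y\<in>topspace T. \<forall>U. openin T U \<and> y \<in> U \<longrightarrow> (\<exists>Q\<in>P y. Q \<subseteq> U)) \<and>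
     (\<forall>G. G \<subseteq> topspace T \<and> (\<forall>y\<in>G. \<exists>Q\<in>P y. Q \<subseteq> G) \<longrightarrow> openin T G)"

definition g_first_countable :: "'a topology \<Rightarrow> bool" where
  "g_first_countable T \<longleftrightarrow> (\<exists>P. weak_base T P \<and> (\<forall>y\<in>topspace T. countable (P y)))"

end

theory Submission
  imports Defs
begin

text \<open>
  A point of a g-first-countable space has a countable directed weak base, which can be
  refined to a decreasing cofinal sequence; so a point with no weak neighbourhood inside a
  set is the limit of a sequence outside that set, and sequentially open sets are open.

  Conversely, given a countable weak base \<open>P\<close> of \<open>X\<close>, take as weak neighbourhoods of
  \<open>A \<in> F(X)\<close> the Vietoris sets \<open>\<langle>q a : a \<in> A\<rangle>\<close> with \<open>q a \<in> P a\<close>: countably many,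
  directed, and refining the Vietoris neighbourhoods of \<open>A\<close>. In a Hausdorff space every
  member of \<open>P a\<close> is a sequential neighbourhood of \<open>a\<close>; separating \<open>a\<close> from the other
  points of \<open>A\<close>, this shows that a sequence converging to \<open>A\<close> eventually lies in
  \<open>\<langle>q a : a \<in> A\<rangle>\<close>. Hence a set containing such a set around each of its points is
  sequentially open, and open when \<open>F(X)\<close> is sequential.
\<close>

lemma weak_base_memD:
  assumes "weak_base T P" "y \<in> topspace T" "Q \<in> P y"
  shows "Q \<subseteq> topspace T" "y \<in> Q"
proof -
  have "\<forall>y\<in>topspace T. \<forall>Q\<in>P y. Q \<subseteq> topspace T \<and> y \<in> Q"
    using assms(1) by (simp add: weak_base_def)
  then show "Q \<subseteq> topspace T" "y \<in> Q" using assms(2,3) by blast+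
qed

lemma weak_base_directed:
  assumes "weak_base T P" "y \<in> topspace T" "U \<in> P y" "V \<in> P y"
  shows "\<exists>W\<in>P y. W \<subseteq> U \<inter> V"
proof -
  have "\<forall>y\<in>topspace T. \<forall>U\<in>P y. \<forall>V\<in>P y. \<exists>W\<in>P y. W \<subseteq> U \<inter> V"
    using assms(1) by (simp add: weak_base_def)
  then show ?thesis using assms(2-4) by blast
qed

lemma weak_base_refines_openin:
  assumes "weak_base T P" "openin T U" "y \<in> U"
  shows "\<exists>Q\<in>P y. Q \<subseteq> U"
proof -
  have "\<forall>y\<in>topspace T. \<forall>U. openin T U \<and> y \<in> U \<longrightarrow> (\<exists>Q\<in>P y. Q \<subseteq> U)"
    using assms(1) by (simp add: weak_base_def)
  then show ?thesis using assms(2,3) openin_subset by blast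
qed

lemma weak_base_openinI:
  assumes "weak_base T P" "G \<subseteq> topspace T" "\<And>y. y \<in> G \<Longrightarrow> \<exists>Q\<in>P y. Q \<subseteq> G"
  shows "openin T G"
proof -
  have "\<forall>G. G \<subseteq> topspace T \<and> (\<forall>y\<in>G. \<exists>Q\<in>P y. Q \<subseteq> G) \<longrightarrow> openin T G"
    using assms(1) by (simp add: weak_base_def)
  then show ?thesis using assms(2,3) by blast
qed

lemma countable_directed_cofinal_sequence:
  assumes "countable \<F>" "\<F> \<noteq> {}" and directed: "\<And>U V. U \<in> \<F> \<Longrightarrow> V \<in> \<F> \<Longrightarrow> \<exists>W\<in>\<F>. W \<subseteq> U \<inter> V"
  obtains g :: "nat \<Rightarrow> 'a set"
  where "\<And>n. g n \<in> \<F>" "\<And>U. U \<in> \<F> \<Longrightarrow> eventually (\<lambda>n. g n \<subseteq> U) sequentially"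
proof -
  define f where "f = from_nat_into \<F>"
  have f: "f n \<in> \<F>" for n
    unfolding f_def using assms(2) by (rule from_nat_into)
  define meet where "meet U V = (SOME W. W \<in> \<F> \<and> W \<subseteq> U \<inter> V)" for U V
  have meet: "meet U V \<in> \<F> \<and> meet U V \<subseteq> U \<inter> V" if "U \<in> \<F>" "V \<in> \<F>" for U V
    unfolding meet_def by (rule someI_ex) (use directed[OF that] in blast)
  define g where "g = rec_nat (f 0) (\<lambda>n W. meet W (f (Suc n)))"
  have g: "g n \<in> \<F> \<and> (\<forall>k\<le>n. g n \<subseteq> f k)" for n
  proof (induction n)
    case 0
    then show ?case using f by (simp add: g_def)
  next
    case (Suc n)
    then have "g (Suc n) \<in> \<F> \<and> g (Suc n) \<subseteq> g n \<inter> f (Suc n)"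
      using meet f by (simp add: g_def)
    then show ?case using Suc by (auto simp: le_Suc_eq)
  qed
  show thesis
  proof
    show "g n \<in> \<F>" for n using g by blast
    fix U assume "U \<in> \<F>"
    then obtain k where "U = f k"
      unfolding f_def using assms(1) by (metis from_nat_into_surj)
    then show "eventually (\<lambda>n. g n \<subseteq> U) sequentially"
      unfolding eventually_sequentially using g by blast
  qed
qed

lemma g_first_countable_imp_sequential_space:
  assumes "g_first_countable T"
  shows "sequential_space T"
  unfolding sequential_space_def
proof (intro allI impI)
  fix U assume U: "sequentially_open T U"
  obtain P where wb: "weak_base T P" and countable: "\<forall>y\<in>topspace T. countable (P y)"
    using assms unfolding g_first_countable_def by blast
  have UT: "U \<subseteq> topspace T" using U by (simp add: sequentially_open_def)
  show "openin T U"
  proof (rule weak_base_openinI[OF wb UT])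
    fix y assume y: "y \<in> U"
    then have yT: "y \<in> topspace T" using UT by blast
    show "\<exists>Q\<in>P y. Q \<subseteq> U"
    proof (rule ccontr)
      assume none: "\<not> (\<exists>Q\<in>P y. Q \<subseteq> U)"
      have "countable (P y)" using countable yT by blast
      moreover have "P y \<noteq> {}" using weak_base_refines_openin[OF wb openin_topspace yT] by blast
      ultimately obtain g where g: "\<And>n. g n \<in> P y"
          "\<And>Q. Q \<in> P y \<Longrightarrow> eventually (\<lambda>n. g n \<subseteq> Q) sequentially"
        using countable_directed_cofinal_sequence weak_base_directed[OF wb yT] by blast
      have "\<forall>n. \<exists>x. x \<in> g n - U" using none g(1) by blast
      then obtain x where "\<forall>n. x n \<in> g n - U" by (rule choice[THEN exE])
      then have x: "\<And>n. x n \<in> g n" "\<And>n. x n \<notin> U" by auto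
      have xT: "x n \<in> topspace T" for n using x(1) g(1) weak_base_memD(1)[OF wb yT] by blast
      have "limitin T x y sequentially"
        unfolding limitin_def
      proof (intro conjI allI impI)
        show "y \<in> topspace T" by fact
        fix V assume "openin T V \<and> y \<in> V"
        then obtain Q where "Q \<in> P y" "Q \<subseteq> V" using weak_base_refines_openin[OF wb] by blast
        from g(2)[OF \<open>Q \<in> P y\<close>] show "eventually (\<lambda>n. x n \<in> V) sequentially"
          by (rule eventually_mono) (use x(1) \<open>Q \<subseteq> V\<close> in blast)
      qed
      then have "eventually (\<lambda>n. x n \<in> U) sequentially"
        using U y xT unfolding sequentially_open_def by blast
      then show False using x(2) by simp
    qed
  qed
qed

lemma Hausdorff_limitin_separate_from_range:
  assumes "Hausdorff_space X" "limitin X t a sequentially" "y \<in> topspace X" "y \<noteq> a"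
  obtains W where "openin X W" "y \<in> W" "W \<inter> range t \<subseteq> {y}"
proof -
  have "a \<in> topspace X" using assms(2) by (simp add: limitin_def)
  then obtain U V where UV: "openin X U" "openin X V" "y \<in> U" "a \<in> V" "disjnt U V"
    using assms(1,3,4) unfolding Hausdorff_space_def by blast
  have "eventually (\<lambda>n. t n \<in> V) sequentially"
    using assms(2) UV(2,4) unfolding limitin_def by blast
  then obtain N where N: "\<And>n. n \<ge> N \<Longrightarrow> t n \<in> V"
    unfolding eventually_sequentially by blast
  define F where "F = topspace X \<inter> t ` {..<N} - {y}"
  have "\<forall>S. finite S \<and> S \<subseteq> topspace X \<longrightarrow> closedin X S"
    using Hausdorff_imp_t1_space[OF assms(1)] by (simp only: t1_space_closedin_finite)
  moreover have "finite F" "F \<subseteq> topspace X" unfolding F_def by auto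
  ultimately have "openin X (U - F)" using UV(1) by (simp add: openin_diff)
  moreover have "y \<in> U - F" using UV(3) by (simp add: F_def)
  moreover have "(U - F) \<inter> range t \<subseteq> {y}"
  proof
    fix w assume w: "w \<in> (U - F) \<inter> range t"
    then obtain n where n: "w = t n" by blast
    show "w \<in> {y}"
    proof (cases "n < N")
      case True
      then show ?thesis using w n openin_subset[OF UV(1)] by (auto simp: F_def)
    next
      case False
      then have "w \<in> V" using n N by simp
      then show ?thesis using w UV(5) by (auto simp: disjnt_def)
    qed
  qed
  ultimately show thesis by (rule that)
qed

lemma limitin_eventually_in_weak_base:
  assumes H: "Hausdorff_space X" and wb: "weak_base X P"
    and lim: "limitin X t a sequentially" and Q: "Q \<in> P a"
  shows "eventually (\<lambda>n. t n \<in> Q) sequentially"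
proof -
  have aT: "a \<in> topspace X" using lim by (simp add: limitin_def)
  have Q_props: "Q \<subseteq> topspace X" "a \<in> Q" using weak_base_memD[OF wb aT Q] by auto
  define G where "G = topspace X - t ` {n. t n \<notin> Q}"
  have "openin X G"
  proof (rule weak_base_openinI[OF wb])
    show "G \<subseteq> topspace X" by (auto simp: G_def)
    fix y assume y: "y \<in> G"
    show "\<exists>Q'\<in>P y. Q' \<subseteq> G"
    proof (cases "y = a")
      case True
      then show ?thesis using Q Q_props by (auto simp: G_def)
    next
      case False
      obtain W where W: "openin X W" "y \<in> W" "W \<inter> range t \<subseteq> {y}"
        using Hausdorff_limitin_separate_from_range[OF H lim _ False] y by (auto simp: G_def)
      have "W \<subseteq> G" using W y openin_subset[OF W(1)] by (auto simp: G_def)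
      then show ?thesis using weak_base_refines_openin[OF wb W(1,2)] by blast
    qed
  qed
  moreover have "a \<in> G" using aT Q_props by (auto simp: G_def)
  ultimately have "eventually (\<lambda>n. t n \<in> G) sequentially" using lim by (simp add: limitin_def)
  then show ?thesis by (rule eventually_mono) (auto simp: G_def)
qed

lemma topspace_fin_subsets_topology [simp]:
  "topspace (fin_subsets_topology X) = fin_subsets X"
proof -
  have "vietoris_basic X Us \<subseteq> fin_subsets X" for Us
    by (auto simp: vietoris_basic_def)
  moreover have "vietoris_basic X {topspace X} = fin_subsets X"
    by (auto simp: vietoris_basic_def fin_subsets_def)
  ultimately show ?thesis
    unfolding fin_subsets_topology_def topology_generated_by_topspace
    by (intro equalityI; blast intro: exI[of _ "{topspace X}"])
qed

lemma openin_vietoris_basic: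
  assumes "finite Us" "Us \<noteq> {}" "\<And>U. U \<in> Us \<Longrightarrow> openin X U"
  shows "openin (fin_subsets_topology X) (vietoris_basic X Us)"
  unfolding fin_subsets_topology_def
  by (rule topology_generated_by_Basis) (use assms in blast)

lemma limitin_fin_subsets_eventually_vietoris_basic:
  assumes "limitin (fin_subsets_topology X) s A sequentially" "A \<in> vietoris_basic X Us"
    and "finite Us" "Us \<noteq> {}" "\<And>U. U \<in> Us \<Longrightarrow> openin X U"
  shows "eventually (\<lambda>n. s n \<in> vietoris_basic X Us) sequentially"
  using assms openin_vietoris_basic unfolding limitin_def by blast

lemma vietoris_basic_image_mono:
  "(\<And>a. a \<in> A \<Longrightarrow> q' a \<subseteq> q a) \<Longrightarrow> vietoris_basic X (q' ` A) \<subseteq> vietoris_basic X (q ` A)"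
  unfolding vietoris_basic_def by blast

lemma PiE_choice:
  assumes "\<And>a. a \<in> A \<Longrightarrow> \<exists>Q\<in>P a. R a Q"
  shows "\<exists>q\<in>Pi\<^sub>E A P. \<forall>a\<in>A. R a (q a)"
proof -
  obtain f where "\<forall>a\<in>A. f a \<in> P a \<and> R a (f a)" using assms by metis
  then show ?thesis by (intro bexI[of _ "restrict f A"]) auto
qed

definition vietoris_weak_base :: "'a topology \<Rightarrow> ('a \<Rightarrow> 'a set set) \<Rightarrow> 'a set \<Rightarrow> 'a set set set" where
  "vietoris_weak_base X P A = (\<lambda>q. vietoris_basic X (q ` A)) ` (Pi\<^sub>E A P)"

lemma countable_vietoris_weak_base:
  assumes "\<And>a. a \<in> A \<Longrightarrow> countable (P a)" "finite A"
  shows "countable (vietoris_weak_base X P A)"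
  unfolding vietoris_weak_base_def using assms by (intro countable_image countable_PiE)

lemma vietoris_weak_base_directed:
  assumes wb: "weak_base X P" and A: "A \<subseteq> topspace X" and "q1 \<in> Pi\<^sub>E A P" "q2 \<in> Pi\<^sub>E A P"
  shows "\<exists>q\<in>Pi\<^sub>E A P. vietoris_basic X (q ` A) \<subseteq> vietoris_basic X (q1 ` A) \<inter> vietoris_basic X (q2 ` A)"
proof -
  have "\<exists>Q\<in>P a. Q \<subseteq> q1 a \<inter> q2 a" if "a \<in> A" for a
    using weak_base_directed[OF wb] A that PiE_mem[OF assms(3) that] PiE_mem[OF assms(4) that]
    by blast
  then obtain q where q: "q \<in> Pi\<^sub>E A P" "\<forall>a\<in>A. q a \<subseteq> q1 a \<inter> q2 a"
    using PiE_choice[of A P "\<lambda>a Q. Q \<subseteq> q1 a \<inter> q2 a"] by blast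
  have "vietoris_basic X (q ` A) \<subseteq> vietoris_basic X (q1 ` A)"
    "vietoris_basic X (q ` A) \<subseteq> vietoris_basic X (q2 ` A)"
    using q(2) by (auto intro!: vietoris_basic_image_mono)
  then show ?thesis using q(1) by blast
qed

lemma vietoris_basic_contains_weak_nbhd:
  assumes wb: "weak_base X P" and A: "A \<in> vietoris_basic X Us"
    and Us: "finite Us" "\<And>U. U \<in> Us \<Longrightarrow> openin X U"
  shows "\<exists>q\<in>Pi\<^sub>E A P. vietoris_basic X (q ` A) \<subseteq> vietoris_basic X Us"
proof -
  define W where "W a = \<Inter>{U \<in> Us. a \<in> U}" for a
  have "\<exists>Q\<in>P a. Q \<subseteq> W a" if "a \<in> A" for a
  proof -
    have "{U \<in> Us. a \<in> U} \<noteq> {}" using A that by (auto simp: vietoris_basic_def)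
    then have "openin X (W a)" unfolding W_def using Us by (intro openin_Inter) auto
    moreover have "a \<in> W a" by (simp add: W_def)
    ultimately show ?thesis by (rule weak_base_refines_openin[OF wb])
  qed
  then obtain q where q: "q \<in> Pi\<^sub>E A P" "\<forall>a\<in>A. q a \<subseteq> W a"
    using PiE_choice[of A P "\<lambda>a Q. Q \<subseteq> W a"] by blast
  have "B \<in> vietoris_basic X Us" if B: "B \<in> vietoris_basic X (q ` A)" for B
  proof -
    have "B \<subseteq> \<Union>(q ` A)" "B \<in> fin_subsets X" using B by (auto simp: vietoris_basic_def)
    moreover have "\<Union>(q ` A) \<subseteq> \<Union>Us"
    proof
      fix b assume "b \<in> \<Union>(q ` A)"
      then obtain a where a: "a \<in> A" "b \<in> W a" using q(2) by blast
      then obtain U where "U \<in> Us" "a \<in> U" using A by (auto simp: vietoris_basic_def)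
      then show "b \<in> \<Union>Us" using a(2) by (auto simp: W_def)
    qed
    moreover have "B \<inter> U \<noteq> {}" if "U \<in> Us" for U
    proof -
      obtain a where a: "a \<in> A" "a \<in> U" using A \<open>U \<in> Us\<close> by (auto simp: vietoris_basic_def)
      then have "q a \<subseteq> U" using q(2) \<open>U \<in> Us\<close> by (auto simp: W_def)
      moreover have "B \<inter> q a \<noteq> {}" using B a(1) by (auto simp: vietoris_basic_def)
      ultimately show ?thesis by blast
    qed
    ultimately show ?thesis by (auto simp: vietoris_basic_def)
  qed
  then show ?thesis using q(1) by blast
qed

lemma openin_fin_subsets_contains_weak_nbhd:
  assumes wb: "weak_base X P" and "openin (fin_subsets_topology X) \<U>" "A \<in> \<U>"
  shows "\<exists>q\<in>Pi\<^sub>E A P. vietoris_basic X (q ` A) \<subseteq> \<U>"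
proof -
  have "generate_topology_on
          {vietoris_basic X Us | Us. finite Us \<and> Us \<noteq> {} \<and> (\<forall>U\<in>Us. openin X U)} \<U>"
    using assms(2) unfolding fin_subsets_topology_def by (rule openin_topology_generated_by)
  then have "\<forall>A\<in>\<U>. A \<in> fin_subsets X \<longrightarrow> (\<exists>q\<in>Pi\<^sub>E A P. vietoris_basic X (q ` A) \<subseteq> \<U>)"
  proof induction
    case Empty
    then show ?case by simp
  next
    case (Int \<U>\<^sub>1 \<U>\<^sub>2)
    show ?case
    proof (intro ballI impI)
      fix A assume "A \<in> \<U>\<^sub>1 \<inter> \<U>\<^sub>2" and A: "A \<in> fin_subsets X"
      then have "A \<in> \<U>\<^sub>1" "A \<in> \<U>\<^sub>2" by auto
      obtain q1 where q1: "q1 \<in> Pi\<^sub>E A P" "vietoris_basic X (q1 ` A) \<subseteq> \<U>\<^sub>1"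
        using Int.IH(1) \<open>A \<in> \<U>\<^sub>1\<close> A by blast
      obtain q2 where q2: "q2 \<in> Pi\<^sub>E A P" "vietoris_basic X (q2 ` A) \<subseteq> \<U>\<^sub>2"
        using Int.IH(2) \<open>A \<in> \<U>\<^sub>2\<close> A by blast
      have "A \<subseteq> topspace X" using A by (simp add: fin_subsets_def)
      then obtain q where "q \<in> Pi\<^sub>E A P"
          "vietoris_basic X (q ` A) \<subseteq> vietoris_basic X (q1 ` A) \<inter> vietoris_basic X (q2 ` A)"
        using vietoris_weak_base_directed[OF wb _ q1(1) q2(1)] by blast
      with q1(2) q2(2) show "\<exists>q\<in>Pi\<^sub>E A P. vietoris_basic X (q ` A) \<subseteq> \<U>\<^sub>1 \<inter> \<U>\<^sub>2"
        by blast
    qed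
  next
    case (UN \<K>)
    show ?case
    proof (intro ballI impI)
      fix A assume A: "A \<in> \<Union>\<K>" "A \<in> fin_subsets X"
      then obtain \<V> where "\<V> \<in> \<K>" "A \<in> \<V>" by blast
      from UN.IH[OF \<open>\<V> \<in> \<K>\<close>] obtain q where q: "q \<in> Pi\<^sub>E A P" "vietoris_basic X (q ` A) \<subseteq> \<V>"
        using \<open>A \<in> \<V>\<close> A(2) by blast
      show "\<exists>q\<in>Pi\<^sub>E A P. vietoris_basic X (q ` A) \<subseteq> \<Union>\<K>"
        using q \<open>\<V> \<in> \<K>\<close> by (intro bexI[of _ q]) auto
    qed
  next
    case (Basis S)
    then obtain Us where "S = vietoris_basic X Us" "finite Us" "\<forall>U\<in>Us. openin X U"
      by blast
    then show ?case using vietoris_basic_contains_weak_nbhd[OF wb] by simp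
  qed
  moreover have "A \<in> fin_subsets X"
    using openin_subset[OF assms(2)] assms(3) by (simp add: subset_iff)
  ultimately show ?thesis using assms(3) by blast
qed

lemma limitin_fin_subsets_trace_in_weak_base:
  assumes H: "Hausdorff_space X" and wb: "weak_base X P"
    and lim: "limitin (fin_subsets_topology X) s A sequentially"
    and a: "a \<in> A" and Q: "Q \<in> P a"
  obtains V where "openin X V" "a \<in> V"
    "eventually (\<lambda>n. s n \<inter> V \<noteq> {} \<and> s n \<inter> V \<subseteq> Q) sequentially"
proof -
  have A: "A \<in> fin_subsets X" using lim by (simp add: limitin_def)
  then have "compactin X {a}" "compactin X (A - {a})"
    using a by (auto simp: fin_subsets_def intro: finite_imp_compactin)
  moreover have "disjnt {a} (A - {a})" by (simp add: disjnt_def)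
  ultimately obtain V W where VW: "openin X V" "openin X W" "{a} \<subseteq> V" "A - {a} \<subseteq> W" "disjnt V W"
    by (rule Hausdorff_space_compact_separation[OF H])
  have aV: "a \<in> V" using VW(3) by simp
  have "A \<in> vietoris_basic X {V \<union> W, V}"
    using A a aV VW(4) by (auto simp: vietoris_basic_def)
  then have "eventually (\<lambda>n. s n \<in> vietoris_basic X {V \<union> W, V}) sequentially"
    using VW(1,2) by (intro limitin_fin_subsets_eventually_vietoris_basic[OF lim]) auto
  then have meets_V: "eventually (\<lambda>n. s n \<inter> V \<noteq> {}) sequentially"
    by (rule eventually_mono) (simp add: vietoris_basic_def)
  \<comment> \<open>Choosing \<open>t n\<close> outside \<open>Q\<close> whenever possible makes \<open>t n \<in> Q\<close> force \<open>s n \<inter> V \<subseteq> Q\<close>.\<close>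
  define t where "t n = (SOME c. c \<in> s n \<inter> V \<and> (c \<notin> Q \<or> s n \<inter> V \<subseteq> Q))" for n
  have t: "t n \<in> s n \<inter> V \<and> (t n \<notin> Q \<or> s n \<inter> V \<subseteq> Q)" if "s n \<inter> V \<noteq> {}" for n
    unfolding t_def by (rule someI_ex) (use that in blast)
  have "limitin X t a sequentially"
    unfolding limitin_def
  proof (intro conjI allI impI)
    show "a \<in> topspace X" using A a by (auto simp: fin_subsets_def)
    fix U assume U: "openin X U \<and> a \<in> U"
    have "A \<in> vietoris_basic X {(U \<inter> V) \<union> W}"
      using A a aV U VW(4) by (auto simp: vietoris_basic_def)
    then have "eventually (\<lambda>n. s n \<in> vietoris_basic X {(U \<inter> V) \<union> W}) sequentially"
      using VW(1,2) U by (intro limitin_fin_subsets_eventually_vietoris_basic[OF lim]) auto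
    with meets_V show "eventually (\<lambda>n. t n \<in> U) sequentially"
    proof eventually_elim
      case (elim n)
      then have "t n \<in> s n \<inter> V" "s n \<subseteq> (U \<inter> V) \<union> W"
        using t by (auto simp: vietoris_basic_def)
      then show "t n \<in> U" using VW(5) by (auto simp: disjnt_def)
    qed
  qed
  then have "eventually (\<lambda>n. t n \<in> Q) sequentially"
    using limitin_eventually_in_weak_base[OF H wb _ Q] by blast
  with meets_V have "eventually (\<lambda>n. s n \<inter> V \<noteq> {} \<and> s n \<inter> V \<subseteq> Q) sequentially"
  proof eventually_elim
    case (elim n)
    then show ?case using t[of n] by blast
  qed
  with VW(1) aV show thesis by (rule that)
qed

lemma limitin_fin_subsets_eventually_weak_nbhd:
  assumes H: "Hausdorff_space X" and wb: "weak_base X P"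
    and lim: "limitin (fin_subsets_topology X) s A sequentially" and q: "q \<in> Pi\<^sub>E A P"
  shows "eventually (\<lambda>n. s n \<in> vietoris_basic X (q ` A)) sequentially"
proof -
  have A: "A \<in> fin_subsets X" using lim by (simp add: limitin_def)
  have "\<exists>V. openin X V \<and> a \<in> V \<and>
          eventually (\<lambda>n. s n \<inter> V \<noteq> {} \<and> s n \<inter> V \<subseteq> q a) sequentially" if "a \<in> A" for a
    using limitin_fin_subsets_trace_in_weak_base[OF H wb lim that PiE_mem[OF q that]] by blast
  then obtain V where V: "\<forall>a\<in>A. openin X (V a) \<and> a \<in> V a \<and>
          eventually (\<lambda>n. s n \<inter> V a \<noteq> {} \<and> s n \<inter> V a \<subseteq> q a) sequentially"
    by (rule bchoice[rule_format, THEN exE]) blast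
  have "finite A" using A by (simp add: fin_subsets_def)
  then have traces: "eventually (\<lambda>n. \<forall>a\<in>A. s n \<inter> V a \<noteq> {} \<and> s n \<inter> V a \<subseteq> q a) sequentially"
    using V by (simp add: eventually_ball_finite_distrib)
  have "A \<in> vietoris_basic X {\<Union>(V ` A)}"
    using A V by (auto simp: vietoris_basic_def fin_subsets_def)
  then have "eventually (\<lambda>n. s n \<in> vietoris_basic X {\<Union>(V ` A)}) sequentially"
    using V by (intro limitin_fin_subsets_eventually_vietoris_basic[OF lim]) auto
  with traces show ?thesis
  proof eventually_elim
    case (elim n)
    have "s n \<subseteq> \<Union>(q ` A)"
    proof
      fix b assume "b \<in> s n"
      then obtain a where "a \<in> A" "b \<in> V a" using elim(2) by (auto simp: vietoris_basic_def)
      then show "b \<in> \<Union>(q ` A)" using elim(1) \<open>b \<in> s n\<close> by blast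
    qed
    moreover have "s n \<inter> q a \<noteq> {}" if "a \<in> A" for a
      using elim(1) that by blast
    ultimately show ?case using elim(2) by (auto simp: vietoris_basic_def)
  qed
qed

lemma weak_base_fin_subsets_topology:
  assumes H: "Hausdorff_space X" and wb: "weak_base X P"
    and seq: "sequential_space (fin_subsets_topology X)"
  shows "weak_base (fin_subsets_topology X) (vietoris_weak_base X P)"
proof -
  have members: "\<B> \<subseteq> fin_subsets X \<and> A \<in> \<B>"
    if A: "A \<in> fin_subsets X" and "\<B> \<in> vietoris_weak_base X P A" for A \<B>
  proof -
    obtain q where q: "q \<in> Pi\<^sub>E A P" "\<B> = vietoris_basic X (q ` A)"
      using \<open>\<B> \<in> vietoris_weak_base X P A\<close> by (auto simp: vietoris_weak_base_def)
    have "a \<in> q a" if "a \<in> A" for a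
      using weak_base_memD(2)[OF wb _ PiE_mem[OF q(1) that]] A that by (auto simp: fin_subsets_def)
    then show ?thesis using A q(2) by (auto simp: vietoris_basic_def)
  qed
  have directed: "\<exists>\<B>\<in>vietoris_weak_base X P A. \<B> \<subseteq> \<B>\<^sub>1 \<inter> \<B>\<^sub>2"
    if A: "A \<in> fin_subsets X" and \<B>: "\<B>\<^sub>1 \<in> vietoris_weak_base X P A" "\<B>\<^sub>2 \<in> vietoris_weak_base X P A"
    for A \<B>\<^sub>1 \<B>\<^sub>2
  proof -
    obtain q1 q2 where "q1 \<in> Pi\<^sub>E A P" "\<B>\<^sub>1 = vietoris_basic X (q1 ` A)"
        "q2 \<in> Pi\<^sub>E A P" "\<B>\<^sub>2 = vietoris_basic X (q2 ` A)"
      using \<B> by (auto simp: vietoris_weak_base_def)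
    moreover have "A \<subseteq> topspace X" using A by (simp add: fin_subsets_def)
    ultimately show ?thesis
      using vietoris_weak_base_directed[OF wb] by (fastforce simp: vietoris_weak_base_def)
  qed
  have refines: "\<exists>\<B>\<in>vietoris_weak_base X P A. \<B> \<subseteq> \<U>"
    if "openin (fin_subsets_topology X) \<U>" "A \<in> \<U>" for A \<U>
    using openin_fin_subsets_contains_weak_nbhd[OF wb that] by (auto simp: vietoris_weak_base_def)
  have sequentially_open: "sequentially_open (fin_subsets_topology X) \<G>"
    if \<G>: "\<G> \<subseteq> fin_subsets X" "\<forall>A\<in>\<G>. \<exists>\<B>\<in>vietoris_weak_base X P A. \<B> \<subseteq> \<G>" for \<G>
    unfolding sequentially_open_def
  proof (intro conjI ballI allI impI)
    show "\<G> \<subseteq> topspace (fin_subsets_topology X)" using \<G>(1) by simp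
    fix A s assume "A \<in> \<G>" and
      "(\<forall>n. s n \<in> topspace (fin_subsets_topology X)) \<and> limitin (fin_subsets_topology X) s A sequentially"
    then have lim: "limitin (fin_subsets_topology X) s A sequentially" by blast
    obtain q where "q \<in> Pi\<^sub>E A P" "vietoris_basic X (q ` A) \<subseteq> \<G>"
      using \<G>(2) \<open>A \<in> \<G>\<close> by (auto simp: vietoris_weak_base_def)
    with limitin_fin_subsets_eventually_weak_nbhd[OF H wb lim]
    show "eventually (\<lambda>n. s n \<in> \<G>) sequentially"
      by (blast intro: eventually_mono)
  qed
  show ?thesis
    unfolding weak_base_def topspace_fin_subsets_topology
    using members directed refines sequentially_open seq
    by (auto simp: sequential_space_def)
qed

theorem theorem4p12:
  fixes X :: "'a topology"
  assumes "regular_space X" and "Hausdorff_space X" and "g_first_countable X"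
  shows "g_first_countable (fin_subsets_topology X) \<longleftrightarrow> sequential_space (fin_subsets_topology X)"
proof
  assume "g_first_countable (fin_subsets_topology X)"
  then show "sequential_space (fin_subsets_topology X)"
    by (rule g_first_countable_imp_sequential_space)
next
  assume seq: "sequential_space (fin_subsets_topology X)"
  obtain P where wb: "weak_base X P" and countable: "\<forall>a\<in>topspace X. countable (P a)"
    using assms(3) unfolding g_first_countable_def by blast
  have "weak_base (fin_subsets_topology X) (vietoris_weak_base X P)"
    using assms(2) wb seq by (rule weak_base_fin_subsets_topology)
  moreover have "countable (vietoris_weak_base X P A)" if "A \<in> fin_subsets X" for A
    using that countable by (intro countable_vietoris_weak_base) (auto simp: fin_subsets_def)
  ultimately show "g_first_countable (fin_subsets_topology X)"
    unfolding g_first_countable_def by auto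
qed

end
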